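(* Let $\rho\in\mathbb R$ and let $\kappa_{\mathbf a}:\mathbb H_\rho\times\mathbb H_\rho\to\mathbb C$ be a positive semi-definite Dirichlet series kernel with coefficient matrix $\mathbf a=(a_{m,n})$. Then $\mathbf a$ is self-adjoint, i.e. $a_{m,n}=\overline{a_{n,m}}$ for all $m,n\ge1$.
   Context: $\mathbb H_\rho=\{\Re s>\rho\}$. $\kappa_{\mathbf a}(s,u)=\sum_{m,n\ge1}a_{m,n}m^{-s}n^{-\bar u}$ is a Dirichlet series kernel on $\mathbb H_\rho$ if $(s,u)\mapsto\kappa_{\mathbf a}(s,\bar u)$ is regularly convergent on $\mathbb H_\rho\times\mathbb H_\rho$ (the double series converges at each point and every row series $\sum_m$ and column series $\sum_n$ converges there). Positive semi-definite: all finite matrices $(\kappa_{\mathbf a}(s_i,s_j))$ are positive semi-definite. *)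

theory Defs
  imports "HOL-Analysis.Analysis"
begin

text \<open>Double sequences are indexed by m, n \<ge> 1 (values at index 0 are ignored).\<close>

definition dpartial :: "(nat \<Rightarrow> nat \<Rightarrow> complex) \<Rightarrow> nat \<Rightarrow> nat \<Rightarrow> complex" where
  "dpartial f M N = (\<Sum>m=1..M. \<Sum>n=1..N. f m n)"

definition dsums :: "(nat \<Rightarrow> nat \<Rightarrow> complex) \<Rightarrow> complex \<Rightarrow> bool" where
  "dsums f L \<longleftrightarrow> ((\<lambda>(M, N). dpartial f M N) \<longlongrightarrow> L) (sequentially \<times>\<^sub>F sequentially)"

definition dsum :: "(nat \<Rightarrow> nat \<Rightarrow> complex) \<Rightarrow> complex" where
  "dsum f = (THE L. dsums f L)"

definition regularly_convergent :: "(nat \<Rightarrow> nat \<Rightarrow> complex) \<Rightarrow> bool" where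
  "regularly_convergent f \<longleftrightarrow>
     (\<exists>L. dsums f L) \<and>
     (\<forall>m\<ge>1. summable (\<lambda>n. f m (Suc n))) \<and>
     (\<forall>n\<ge>1. summable (\<lambda>m. f (Suc m) n))"

definition halfplane :: "real \<Rightarrow> complex set" where
  "halfplane \<rho> = {s. Re s > \<rho>}"

definition ds_term :: "(nat \<Rightarrow> nat \<Rightarrow> complex) \<Rightarrow> complex \<Rightarrow> complex \<Rightarrow> nat \<Rightarrow> nat \<Rightarrow> complex" where
  "ds_term a s u m n = a m n * (of_nat m) powr (-s) * (of_nat n) powr (-u)"

definition kappa :: "(nat \<Rightarrow> nat \<Rightarrow> complex) \<Rightarrow> complex \<Rightarrow> complex \<Rightarrow> complex" where
  "kappa a s u = dsum (ds_term a s (cnj u))"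

definition is_DS_kernel :: "real \<Rightarrow> (nat \<Rightarrow> nat \<Rightarrow> complex) \<Rightarrow> bool" where
  "is_DS_kernel \<rho> a \<longleftrightarrow>
     (\<forall>s\<in>halfplane \<rho>. \<forall>u\<in>halfplane \<rho>. regularly_convergent (ds_term a s u))"

definition psd_kernel_on :: "complex set \<Rightarrow> (complex \<Rightarrow> complex \<Rightarrow> complex) \<Rightarrow> bool" where
  "psd_kernel_on S K \<longleftrightarrow>
     (\<forall>k::nat. \<forall>p::nat \<Rightarrow> complex. \<forall>c::nat \<Rightarrow> complex. (\<forall>i<k. p i \<in> S) \<longrightarrow>
        (let q = (\<Sum>i<k. \<Sum>j<k. cnj (c i) * K (p i) (p j) * c j)
         in Im q = 0 \<and> Re q \<ge> 0))"

end

(*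
  Positive semi-definiteness makes the kernel Hermitian, kappa a s u = cnj (kappa a u s), and the
  right-hand side is the kernel of the adjoint matrix a*(m,n) = cnj (a n m).  So it suffices that a
  Dirichlet series kernel determines its coefficients.  Regular convergence lets the double series
  be summed by rows, kappa a s (cnj w) = sum_m m^-s (sum_n a(m,n) n^-w), and uniqueness of the
  coefficients of an ordinary Dirichlet series, applied first in s and then in w, recovers each
  a(m,n).  That uniqueness holds because (k+1)^sigma sum_n c_n n^-sigma tends to c_(k+1) as
  sigma -> infinity whenever c_1 = ... = c_k = 0 (dominated convergence, i.e. Tannery's theorem).
*)
theory Submission
  imports Defs
begin

lemma psd_kernel_on_hermitian:
  assumes psd: "psd_kernel_on S K" and "s \<in> S" "u \<in> S"
  shows "K s u = cnj (K u s)"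
proof -
  have form_real: "Im (\<Sum>i<k. \<Sum>j<k. cnj (c i) * K (p i) (p j) * c j) = 0"
    if "\<forall>i<k. p i \<in> S" for k :: nat and p c :: "nat \<Rightarrow> complex"
    using psd that unfolding psd_kernel_on_def Let_def by blast
  have diag: "Im (K x x) = 0" if "x \<in> S" for x
    using form_real[of 1 "\<lambda>_. x" "\<lambda>_. 1"] that by simp
  define p where "p i = (if i = 0 then s else u)" for i :: nat
  have p_in: "\<forall>i<2. p i \<in> S"
    using \<open>s \<in> S\<close> \<open>u \<in> S\<close> by (simp add: p_def)
  have expand: "(\<Sum>i<2. \<Sum>j<2. cnj (c i) * K (p i) (p j) * c j) =
      cnj (c 0) * K s s * c 0 + cnj (c 0) * K s u * c 1
      + cnj (c 1) * K u s * c 0 + cnj (c 1) * K u u * c 1" for c :: "nat \<Rightarrow> complex"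
    by (simp add: numeral_2_eq_2 p_def)
  have pair: "Im (cnj (c 0) * K s s * c 0 + cnj (c 0) * K s u * c 1
      + cnj (c 1) * K u s * c 0 + cnj (c 1) * K u u * c 1) = 0" for c :: "nat \<Rightarrow> complex"
    using form_real[OF p_in, of c] unfolding expand .
  have "Im (K s s + K s u + K u s + K u u) = 0"
    using pair[of "\<lambda>_. 1"] by simp
  moreover have "Im (K s s + K s u * \<i> + cnj \<i> * K u s + cnj \<i> * K u u * \<i>) = 0"
    using pair[of "\<lambda>i. if i = 0 then 1 else \<i>"] by simp
  ultimately show ?thesis
    using diag \<open>s \<in> S\<close> \<open>u \<in> S\<close> by (simp add: complex_eq_iff)
qed

lemma dsum_eqI: "dsums f L \<Longrightarrow> dsum f = L"
  unfolding dsum_def dsums_def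
  by (rule the_equality)
    (auto intro: tendsto_unique[of "sequentially \<times>\<^sub>F sequentially"] simp: prod_filter_eq_bot)

lemma regularly_convergent_imp_dsums:
  assumes "regularly_convergent f"
  shows "dsums f (dsum f)"
proof -
  obtain L where "dsums f L"
    using assms unfolding regularly_convergent_def by auto
  then show ?thesis
    by (simp add: dsum_eqI)
qed

lemma dsums_diff:
  "dsums f L \<Longrightarrow> dsums g K \<Longrightarrow> dsums (\<lambda>m n. f m n - g m n) (L - K)"
  unfolding dsums_def dpartial_def
  by (drule (1) tendsto_diff) (simp add: case_prod_unfold sum_subtractf)

lemma regularly_convergent_diff:
  assumes "regularly_convergent f" "regularly_convergent g"
  shows "regularly_convergent (\<lambda>m n. f m n - g m n)"
proof -
  obtain L K where "dsums f L" "dsums g K"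
    using assms unfolding regularly_convergent_def by blast
  then have "dsums (\<lambda>m n. f m n - g m n) (L - K)"
    by (rule dsums_diff)
  with assms show ?thesis
    unfolding regularly_convergent_def by (auto intro: summable_diff)
qed

lemma dsums_cnj_transpose:
  assumes "dsums f L"
  shows "dsums (\<lambda>m n. cnj (f n m)) (cnj L)"
proof -
  have "((\<lambda>(M, N). cnj (dpartial f M N)) \<longlongrightarrow> cnj L) (sequentially \<times>\<^sub>F sequentially)"
    using tendsto_cnj[OF assms[unfolded dsums_def]] by (simp add: case_prod_unfold)
  then have "((\<lambda>(N, M). cnj (dpartial f M N)) \<longlongrightarrow> cnj L) (sequentially \<times>\<^sub>F sequentially)"
    by (subst prod_filter_commute) (simp add: filterlim_filtermap case_prod_unfold)
  moreover have "dpartial (\<lambda>m n. cnj (f n m)) N M = cnj (dpartial f M N)" for M N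
    unfolding dpartial_def cnj_sum by (rule sum.swap)
  ultimately show ?thesis
    unfolding dsums_def by (simp add: case_prod_unfold)
qed

lemma summable_cnj: "summable f \<Longrightarrow> summable (\<lambda>n. cnj (f n))"
  by (metis sums_cnj summable_def)

lemma regularly_convergent_cnj_transpose:
  assumes "regularly_convergent f"
  shows "regularly_convergent (\<lambda>m n. cnj (f n m))"
proof -
  have "dsums (\<lambda>m n. cnj (f n m)) (cnj (dsum f))"
    using assms by (intro dsums_cnj_transpose regularly_convergent_imp_dsums)
  with assms show ?thesis
    unfolding regularly_convergent_def by (auto intro: summable_cnj)
qed

lemma tendsto_iterated_limit:
  fixes g :: "'a \<Rightarrow> 'b \<Rightarrow> 'c :: metric_space"
  assumes lim: "((\<lambda>(x, y). g x y) \<longlongrightarrow> L) (F \<times>\<^sub>F G)"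
    and inner: "\<And>x. (g x \<longlongrightarrow> h x) G" and "G \<noteq> bot"
  shows "(h \<longlongrightarrow> L) F"
proof (rule tendstoI)
  fix e :: real assume "e > 0"
  then have "eventually (\<lambda>(x, y). dist (g x y) L < e / 2) (F \<times>\<^sub>F G)"
    using tendstoD[OF lim, of "e / 2"] by (simp add: case_prod_unfold)
  then obtain P Q where "eventually P F" "eventually Q G"
    and PQ: "\<And>x y. P x \<Longrightarrow> Q y \<Longrightarrow> dist (g x y) L < e / 2"
    unfolding eventually_prod_filter by blast
  have close: "dist (h x) L \<le> e / 2" if "P x" for x
  proof (rule tendsto_upperbound)
    show "((\<lambda>y. dist (g x y) L) \<longlongrightarrow> dist (h x) L) G"
      by (intro tendsto_intros inner)
    show "eventually (\<lambda>y. dist (g x y) L \<le> e / 2) G"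
      using \<open>eventually Q G\<close> by eventually_elim (use PQ that in fastforce)
  qed fact
  show "eventually (\<lambda>x. dist (h x) L < e) F"
    using \<open>eventually P F\<close> by (rule eventually_mono) (use close \<open>e > 0\<close> in fastforce)
qed

lemma dsums_row_sums:
  assumes "dsums f L" and rows: "\<And>m. m \<ge> 1 \<Longrightarrow> summable (\<lambda>n. f m (Suc n))"
  shows "(\<lambda>m. \<Sum>n. f (Suc m) (Suc n)) sums L"
proof -
  have "(\<lambda>M. \<Sum>m=1..M. \<Sum>n. f m (Suc n)) \<longlonglongrightarrow> L"
  proof (rule tendsto_iterated_limit)
    show "((\<lambda>(M, N). dpartial f M N) \<longlongrightarrow> L) (sequentially \<times>\<^sub>F sequentially)"
      using \<open>dsums f L\<close> unfolding dsums_def .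
    show "(\<lambda>N. dpartial f M N) \<longlonglongrightarrow> (\<Sum>m=1..M. \<Sum>n. f m (Suc n))" for M
    proof -
      have "(\<lambda>N. \<Sum>n<N. f m (Suc n)) \<longlonglongrightarrow> (\<Sum>n. f m (Suc n))" if "m \<ge> 1" for m
        using summable_LIMSEQ[OF rows[OF that]] .
      moreover have "(\<Sum>n=1..N. f m n) = (\<Sum>n<N. f m (Suc n))" for m N
        by (simp add: sum.atLeast1_atMost_eq)
      ultimately show ?thesis
        unfolding dpartial_def by (intro tendsto_sum) auto
    qed
  qed simp
  then show ?thesis
    unfolding sums_def by (simp add: sum.atLeast1_atMost_eq)
qed

lemma regularly_convergent_row_sums:
  assumes "regularly_convergent f"
  shows "(\<lambda>m. \<Sum>n. f (Suc m) (Suc n)) sums dsum f"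
proof (rule dsums_row_sums)
  show "dsums f (dsum f)"
    using assms by (rule regularly_convergent_imp_dsums)
  show "summable (\<lambda>n. f m (Suc n))" if "m \<ge> 1" for m
    using assms that unfolding regularly_convergent_def by blast
qed

lemma tendsto_suminf_ratio_power:
  fixes e :: "nat \<Rightarrow> complex"
  assumes B: "\<And>n. norm (e n) \<le> B" and below: "\<And>n. n < k \<Longrightarrow> e n = 0"
  shows "(\<lambda>t. \<Sum>n. e n * of_real ((real (Suc k) / real (Suc n)) ^ t)) \<longlonglongrightarrow> e k"
proof -
  define r where "r n = real (Suc k) / real (Suc n)" for n
  have limit: "(\<lambda>t. e n * of_real (r n ^ t)) \<longlonglongrightarrow> (if n = k then e k else 0)" for n
  proof (cases n k rule: linorder_cases)
    case less
    then show ?thesis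
      by (simp add: below)
  next
    case equal
    then show ?thesis
      by (simp add: r_def)
  next
    case greater
    then have "norm (r n) < 1"
      by (simp add: r_def)
    then show ?thesis
      using greater by (auto intro!: tendsto_eq_intros LIMSEQ_power_zero)
  qed
  have "norm (e n * of_real (r n ^ t)) \<le> B * r n ^ 2" if "n \<ge> k" "t \<ge> 2" for n t
  proof -
    have "0 \<le> r n" "r n \<le> 1"
      using that by (simp_all add: r_def)
    then have "r n ^ t \<le> r n ^ 2"
      using that by (intro power_decreasing)
    moreover have "0 \<le> B"
      using order_trans[OF norm_ge_zero B] .
    ultimately show ?thesis
      using B[of n] \<open>0 \<le> r n\<close> by (simp add: norm_mult norm_power mult_mono)
  qed
  then have dominated: "eventually (\<lambda>(n, t). norm (e n * of_real (r n ^ t)) \<le> B * r n ^ 2)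
      (sequentially \<times>\<^sub>F sequentially)"
    unfolding eventually_prod_sequentially by (intro exI[of _ "max k 2"]) simp
  have "summable (\<lambda>n. inverse (real (Suc n) ^ 2))"
    using inverse_power_summable[of 2] by (subst summable_Suc_iff) simp
  then have "summable (\<lambda>n. B * real (Suc k) ^ 2 * inverse (real (Suc n) ^ 2))"
    by (rule summable_mult)
  moreover have "(\<lambda>n. B * r n ^ 2) = (\<lambda>n. B * real (Suc k) ^ 2 * inverse (real (Suc n) ^ 2))"
    by (simp add: fun_eq_iff r_def divide_inverse power_mult_distrib power_inverse)
  ultimately have "(\<lambda>t. \<Sum>n. e n * of_real (r n ^ t)) \<longlonglongrightarrow> (\<Sum>n. if n = k then e k else 0)"
    using tannerys_theorem[OF limit dominated] by simp
  then show ?thesis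
    using sums_unique[OF sums_single[of k "\<lambda>_. e k"]] by (simp add: r_def)
qed

lemma of_nat_powr_of_real: "(of_nat n :: complex) powr of_real s = of_real (real n powr s)"
  using powr_of_real[of "real n" s] by simp

lemma dirichlet_series_coeffs_eq_0:
  fixes c :: "nat \<Rightarrow> complex"
  assumes zero: "\<And>\<sigma>. \<sigma> > \<rho> \<Longrightarrow> (\<lambda>n. c n * of_nat (Suc n) powr - of_real \<sigma>) sums 0"
  shows "c k = 0"
proof (induction k rule: less_induct)
  case (less k)
  define \<sigma>\<^sub>0 where "\<sigma>\<^sub>0 = \<rho> + 1"
  define e where "e n = c n * of_real (real (Suc n) powr - \<sigma>\<^sub>0)" for n
  have scaled: "(\<lambda>n. e n * of_real ((real (Suc k) / real (Suc n)) ^ t)) sums 0" for t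
  proof -
    have "real (Suc n) powr - (\<sigma>\<^sub>0 + t) = real (Suc n) powr - \<sigma>\<^sub>0 / real (Suc n) ^ t" for n
      by (simp add: powr_diff powr_realpow)
    then have "(of_nat (Suc n) powr - of_real (\<sigma>\<^sub>0 + t) :: complex)
        = of_real (real (Suc n) powr - \<sigma>\<^sub>0) / of_nat (Suc n) ^ t" for n
      using of_nat_powr_of_real[of "Suc n" "- (\<sigma>\<^sub>0 + t)"] by simp
    then show ?thesis
      using sums_mult[OF zero, of "\<sigma>\<^sub>0 + t" "of_real (real (Suc k) ^ t)"]
      by (simp add: \<sigma>\<^sub>0_def e_def power_divide mult_ac)
  qed
  obtain B where "\<And>n. norm (e n) \<le> B"
  proof -
    have "summable e"
      using scaled[of 0] by (simp add: sums_iff)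
    then have "Bseq e"
      using summable_LIMSEQ_zero convergent_imp_Bseq convergentI by blast
    then show ?thesis
      using that unfolding Bseq_def by blast
  qed
  then have "(\<lambda>t. \<Sum>n. e n * of_real ((real (Suc k) / real (Suc n)) ^ t)) \<longlonglongrightarrow> e k"
    by (rule tendsto_suminf_ratio_power) (simp add: e_def less.IH)
  moreover have "(\<Sum>n. e n * of_real ((real (Suc k) / real (Suc n)) ^ t)) = 0" for t
    using scaled by (simp add: sums_iff)
  ultimately have "e k = 0"
    by (simp add: LIMSEQ_const_iff)
  then show ?case
    by (simp add: e_def)
qed

lemma halfplane_cnj_iff [simp]: "cnj s \<in> halfplane \<rho> \<longleftrightarrow> s \<in> halfplane \<rho>"
  by (simp add: halfplane_def)

lemma of_real_in_halfplane_iff [simp]: "of_real \<sigma> \<in> halfplane \<rho> \<longleftrightarrow> \<sigma> > \<rho>"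
  by (simp add: halfplane_def)

lemma ds_term_diff:
  "ds_term (\<lambda>m n. a m n - b m n) s w = (\<lambda>m n. ds_term a s w m n - ds_term b s w m n)"
  by (simp add: ds_term_def fun_eq_iff algebra_simps)

lemma is_DS_kernel_diff:
  "is_DS_kernel \<rho> a \<Longrightarrow> is_DS_kernel \<rho> b \<Longrightarrow> is_DS_kernel \<rho> (\<lambda>m n. a m n - b m n)"
  unfolding is_DS_kernel_def ds_term_diff by (simp add: regularly_convergent_diff)

lemma kappa_diff:
  assumes "is_DS_kernel \<rho> a" "is_DS_kernel \<rho> b" "s \<in> halfplane \<rho>" "u \<in> halfplane \<rho>"
  shows "kappa (\<lambda>m n. a m n - b m n) s u = kappa a s u - kappa b s u"
proof -
  have "regularly_convergent (ds_term a s (cnj u))" "regularly_convergent (ds_term b s (cnj u))"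
    using assms unfolding is_DS_kernel_def by simp_all
  then show ?thesis
    unfolding kappa_def ds_term_diff
    by (intro dsum_eqI dsums_diff regularly_convergent_imp_dsums)
qed

definition coeff_adjoint :: "(nat \<Rightarrow> nat \<Rightarrow> complex) \<Rightarrow> nat \<Rightarrow> nat \<Rightarrow> complex" where
  "coeff_adjoint a m n = cnj (a n m)"

lemma ds_term_coeff_adjoint:
  "ds_term (coeff_adjoint a) s w = (\<lambda>m n. cnj (ds_term a (cnj w) (cnj s) n m))"
  by (simp add: ds_term_def coeff_adjoint_def cnj_powr fun_eq_iff)

lemma is_DS_kernel_coeff_adjoint: "is_DS_kernel \<rho> a \<Longrightarrow> is_DS_kernel \<rho> (coeff_adjoint a)"
  unfolding is_DS_kernel_def ds_term_coeff_adjoint by (simp add: regularly_convergent_cnj_transpose)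

lemma kappa_coeff_adjoint:
  assumes "is_DS_kernel \<rho> a" "s \<in> halfplane \<rho>" "u \<in> halfplane \<rho>"
  shows "kappa (coeff_adjoint a) s u = cnj (kappa a u s)"
proof -
  have "regularly_convergent (ds_term a u (cnj s))"
    using assms unfolding is_DS_kernel_def by simp
  then show ?thesis
    unfolding kappa_def ds_term_coeff_adjoint complex_cnj_cnj
    by (intro dsum_eqI dsums_cnj_transpose regularly_convergent_imp_dsums)
qed

lemma kappa_eq_0_imp_coeffs_eq_0:
  assumes kernel: "is_DS_kernel \<rho> a"
    and zero: "\<And>s u. s \<in> halfplane \<rho> \<Longrightarrow> u \<in> halfplane \<rho> \<Longrightarrow> kappa a s u = 0"
  shows "a (Suc m) (Suc n) = 0"
proof -
  define D where "D m w = (\<Sum>n. a (Suc m) (Suc n) * of_nat (Suc n) powr - w)" for m w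
  have convergent: "regularly_convergent (ds_term a s w)"
    if "s \<in> halfplane \<rho>" "w \<in> halfplane \<rho>" for s w
    using kernel that unfolding is_DS_kernel_def by blast
  have row: "(\<lambda>n. ds_term a s w (Suc m) (Suc n))
      = (\<lambda>n. of_nat (Suc m) powr - s * (a (Suc m) (Suc n) * of_nat (Suc n) powr - w))" for s w m
    by (simp add: ds_term_def fun_eq_iff ac_simps)
  have row_summable: "summable (\<lambda>n. a (Suc m) (Suc n) * of_nat (Suc n) powr - w)"
    if "w \<in> halfplane \<rho>" for m w
  proof -
    have "summable (\<lambda>n. ds_term a (of_real (\<rho> + 1)) w (Suc m) (Suc n))"
      using convergent[OF _ that, of "of_real (\<rho> + 1)"] unfolding regularly_convergent_def
      by (simp del: of_real_add)
    moreover have "(of_nat (Suc m) :: complex) powr - of_real (\<rho> + 1) \<noteq> 0"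
      using of_nat_neq_0[of m, where 'a = complex] by (simp add: powr_def)
    ultimately show ?thesis
      unfolding row by simp
  qed
  have "(\<lambda>m. D m w * of_nat (Suc m) powr - s) sums 0"
    if "s \<in> halfplane \<rho>" "w \<in> halfplane \<rho>" for s w
  proof -
    have "(\<lambda>m. \<Sum>n. ds_term a s w (Suc m) (Suc n)) sums kappa a s (cnj w)"
      unfolding kappa_def complex_cnj_cnj by (rule regularly_convergent_row_sums[OF convergent[OF that]])
    moreover have "(\<Sum>n. ds_term a s w (Suc m) (Suc n)) = D m w * of_nat (Suc m) powr - s" for m
      unfolding row D_def using row_summable[OF that(2)] by (simp add: suminf_mult)
    ultimately show ?thesis
      using zero[of s "cnj w"] that by simp
  qed
  then have "D m w = 0" if "w \<in> halfplane \<rho>" for m w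
    using that by (intro dirichlet_series_coeffs_eq_0[of \<rho>]) simp
  then have "(\<lambda>n. a (Suc m) (Suc n) * of_nat (Suc n) powr - w) sums 0" if "w \<in> halfplane \<rho>" for w
    using summable_sums[OF row_summable[OF that]] that by (simp add: D_def)
  then show ?thesis
    by (intro dirichlet_series_coeffs_eq_0[of \<rho>]) simp
qed

lemma DS_kernel_coeffs_unique:
  assumes "is_DS_kernel \<rho> a" "is_DS_kernel \<rho> b"
    and same: "\<And>s u. s \<in> halfplane \<rho> \<Longrightarrow> u \<in> halfplane \<rho> \<Longrightarrow> kappa a s u = kappa b s u"
    and "m \<ge> 1" "n \<ge> 1"
  shows "a m n = b m n"
proof -
  define d where "d = (\<lambda>m n. a m n - b m n)"
  have "is_DS_kernel \<rho> d"
    unfolding d_def using assms(1,2) by (rule is_DS_kernel_diff)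
  moreover have "kappa d s u = 0" if "s \<in> halfplane \<rho>" "u \<in> halfplane \<rho>" for s u
    unfolding d_def using kappa_diff[OF assms(1,2) that] same[OF that] by simp
  ultimately have "d (Suc m') (Suc n') = 0" for m' n'
    by (rule kappa_eq_0_imp_coeffs_eq_0)
  moreover obtain m' n' where "m = Suc m'" "n = Suc n'"
    using \<open>m \<ge> 1\<close> \<open>n \<ge> 1\<close> by (cases m; cases n) auto
  ultimately show ?thesis
    by (simp add: d_def)
qed

theorem lemma2p4:
  fixes \<rho> :: real and a :: "nat \<Rightarrow> nat \<Rightarrow> complex"
  assumes "is_DS_kernel \<rho> a"
    and "psd_kernel_on (halfplane \<rho>) (kappa a)"
  shows "\<forall>m\<ge>1. \<forall>n\<ge>1. a m n = cnj (a n m)"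
proof (intro allI impI)
  fix m n :: nat assume "m \<ge> 1" "n \<ge> 1"
  have hermitian: "kappa a s u = kappa (coeff_adjoint a) s u"
    if "s \<in> halfplane \<rho>" "u \<in> halfplane \<rho>" for s u
    using psd_kernel_on_hermitian[OF assms(2) that] kappa_coeff_adjoint[OF assms(1) that] by simp
  have "a m n = coeff_adjoint a m n"
    using assms(1) is_DS_kernel_coeff_adjoint[OF assms(1)] hermitian \<open>m \<ge> 1\<close> \<open>n \<ge> 1\<close>
    by (rule DS_kernel_coeffs_unique)
  then show "a m n = cnj (a n m)"
    by (simp add: coeff_adjoint_def)
qed

end
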